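(* Let $\mathcal{N}\subseteq\mathbb{R}^n$ be a smooth manifold with volume form $dV$ inherited from $\mathbb{R}^n$, let $q>0$ be a weight function on $\mathcal{N}$, and let $\{\psi_k\}_{k\in\mathbb{N}^+}$ be a complete orthonormal basis of $L^2(\mathcal{N},q)$. Let $\boldsymbol{\theta}_1,\dots,\boldsymbol{\theta}_M$ be parameter values, and for each $j$ let $p(\mathbf{y}|\boldsymbol{\theta}_j)$ be a probability density on $\mathcal{N}$ (w.r.t. $dV$) with $p(\cdot|\boldsymbol{\theta}_j)\in\mathcal{H}_{q^{-1}}(\mathcal{N})$, and let $\mathbf{y}_{1,j},\dots,\mathbf{y}_{N,j}$ be i.i.d. samples with density $p(\cdot|\boldsymbol{\theta}_j)$. Assume $\mathrm{Var}_{\mathbf{Y}|\boldsymbol{\theta}_j}[\psi_k(\mathbf{Y})]<\infty$ for all $k\in\mathbb{N}^+$ and all $j=1,\dots,M$. Define $c_{\mathbf{Y}|\boldsymbol{\theta}_j,k}=\int_{\mathcal{N}}p(\mathbf{y}|\boldsymbol{\theta}_j)\psi_k(\mathbf{y})\,dV$, $\widehat c_{\mathbf{Y}|\boldsymbol{\theta}_j,k}=\frac1N\sum_{i=1}^N\psi_k(\mathbf{y}_{i,j})$, and for $K_1\in\mathbb{N}^+$, $$\widehat p(\mathbf{y}|\boldsymbol{\theta}_j)=\sum_{k=1}^{K_1}\widehat c_{\mathbf{Y}|\boldsymbol{\theta}_j,k}\psi_k(\mathbf{y})q(\mathbf{y}),\quad \widehat e(\mathbf{y}|\boldsymbol{\theta}_j)=p(\mathbf{y}|\boldsymbol{\theta}_j)-\widehat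 p(\mathbf{y}|\boldsymbol{\theta}_j),$$ $$\widehat e_{L^2}=\Big(\sum_{j=1}^M\int_{\mathcal{N}}|\widehat e(\mathbf{y}|\boldsymbol{\theta}_j)|^2q^{-1}(\mathbf{y})\,dV\Big)^{1/2}.$$ Then, with $\mathbb{E}$ and $\mathrm{Var}$ taken with respect to the joint distribution of the samples, $$\mathbb{E}[\widehat e_{L^2}]\le\Big(\sum_{j=1}^M\sum_{k=K_1+1}^\infty c_{\mathbf{Y}|\boldsymbol{\theta}_j,k}^2+\frac1N\sum_{j=1}^M\sum_{k=1}^{K_1}\mathrm{Var}_{\mathbf{Y}|\boldsymbol{\theta}_j}[\psi_k(\mathbf{Y})]\Big)^{1/2},$$ $$\mathrm{Var}[\widehat e_{L^2}]\le\sum_{j=1}^M\sum_{k=K_1+1}^\infty c_{\mathbf{Y}|\boldsymbol{\theta}_j,k}^2+\frac1N\sum_{j=1}^M\sum_{k=1}^{K_1}\mathrm{Var}_{\mathbf{Y}|\boldsymbol{\theta}_j}[\psi_k(\mathbf{Y})].$$ Moreover, $\mathbb{E}[\widehat e_{L^2}]$ and $\mathrm{Var}[\widehat e_{L^2}]$ converge to zero as first $K_1\to\infty$ and then $N\to\infty$: for every $\varepsilon>0$ there is $K_1$ and $N_{\min}$ (depending on $K_1$ and $\varepsilon$) such that for all $N>N_{\min}$ both $\mathbb{E}[\widehat e_{L^2}]<\varepsilon$ and $\mathrm{Var}[\widehat e_{L^2}]<\varepsilon$.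
   Context: $L^2(\mathcal{N},w)$ denotes the Hilbert space of functions $f$ on $\mathcal{N}$ with $\int_{\mathcal{N}}|f|^2 w\,dV<\infty$ and inner product $\int fg\,w\,dV$; orthonormality of $\{\psi_k\}$ means $\int\psi_k\psi_l\,q\,dV=\delta_{kl}$, so $\Psi_k:=\psi_kq$ form an orthonormal basis of $L^2(\mathcal{N},q^{-1})$. The space $\mathcal{H}_{q^{-1}}(\mathcal{N})$ is the reproducing kernel Hilbert space generated by a kernel $K(\mathbf{y},\mathbf{y}')=\sum_k\lambda_k\Psi_k(\mathbf{y})\Psi_k(\mathbf{y}')$ with positive eigenvalues $\lambda_k$ (of the associated Hilbert–Schmidt integral operator on $L^2(\mathcal{N},q^{-1})$): it consists of those $f=\sum_k\hat f_k\Psi_k\in L^2(\mathcal{N},q^{-1})$, $\hat f_k=\int f\psi_k\,dV$, with $\sum_k|\hat f_k|^2/\lambda_k<\infty$; in particular $\mathcal{H}_{q^{-1}}(\mathcal{N})\subset L^2(\mathcal{N},q^{-1})$. *)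

theory Defs
  imports "HOL-Probability.Probability"
begin

text \<open>The manifold with its volume form is modelled as a measure space Mv
  (carrier = the manifold, measure = dV). Indices k range over positive naturals.\<close>

definition L2w :: "'a measure \<Rightarrow> ('a \<Rightarrow> real) \<Rightarrow> ('a \<Rightarrow> real) \<Rightarrow> bool" where
  "L2w Mv w f \<longleftrightarrow> f \<in> borel_measurable Mv \<and> integrable Mv (\<lambda>y. (f y)\<^sup>2 * w y)"

definition complete_orthonormal :: "'a measure \<Rightarrow> ('a \<Rightarrow> real) \<Rightarrow> (nat \<Rightarrow> 'a \<Rightarrow> real) \<Rightarrow> bool" where
  "complete_orthonormal Mv q \<psi> \<longleftrightarrow>
     (\<forall>k\<ge>1. \<psi> k \<in> borel_measurable Mv) \<and>
     (\<forall>k\<ge>1. \<forall>l\<ge>1. integrable Mv (\<lambda>y. \<psi> k y * \<psi> l y * q y) \<and>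
        (LINT y|Mv. \<psi> k y * \<psi> l y * q y) = (if k = l then 1 else 0)) \<and>
     (\<forall>f. L2w Mv q f \<and> (\<forall>k\<ge>1. (LINT y|Mv. f y * \<psi> k y * q y) = 0)
          \<longrightarrow> (AE y in Mv. f y = 0))"

definition coef :: "'a measure \<Rightarrow> (nat \<Rightarrow> 'a \<Rightarrow> real) \<Rightarrow> ('a \<Rightarrow> real) \<Rightarrow> nat \<Rightarrow> real" where
  "coef Mv \<psi> f k = (LINT y|Mv. f y * \<psi> k y)"

text \<open>RKHS H_{q^{-1}} generated by K = sum_k lam_k Psi_k Psi_k', Psi_k = psi_k q.\<close>
definition in_RKHS :: "'a measure \<Rightarrow> ('a \<Rightarrow> real) \<Rightarrow> (nat \<Rightarrow> 'a \<Rightarrow> real) \<Rightarrow> (nat \<Rightarrow> real)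
    \<Rightarrow> ('a \<Rightarrow> real) \<Rightarrow> bool" where
  "in_RKHS Mv q \<psi> lam f \<longleftrightarrow> L2w Mv (\<lambda>y. inverse (q y)) f \<and>
     summable (\<lambda>k. (coef Mv \<psi> f (Suc k))\<^sup>2 / lam (Suc k))"

definition prob_density :: "'a measure \<Rightarrow> ('a \<Rightarrow> real) \<Rightarrow> bool" where
  "prob_density Mv f \<longleftrightarrow> f \<in> borel_measurable Mv \<and> (\<forall>y\<in>space Mv. f y \<ge> 0) \<and>
     integrable Mv f \<and> (LINT y|Mv. f y) = 1"

definition var_psi :: "'a measure \<Rightarrow> (nat \<Rightarrow> 'a \<Rightarrow> real) \<Rightarrow> ('a \<Rightarrow> real) \<Rightarrow> nat \<Rightarrow> real" where
  "var_psi Mv \<psi> f k = (LINT y|Mv. f y * (\<psi> k y)\<^sup>2) - (coef Mv \<psi> f k)\<^sup>2"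

definition iid_samples :: "'w measure \<Rightarrow> 'a measure \<Rightarrow> (nat \<Rightarrow> nat \<Rightarrow> 'w \<Rightarrow> 'a) \<Rightarrow> nat \<Rightarrow> nat
    \<Rightarrow> (nat \<Rightarrow> 'a \<Rightarrow> real) \<Rightarrow> bool" where
  "iid_samples P Mv Y N Mc f \<longleftrightarrow> prob_space P \<and>
     (\<forall>j\<in>{1..Mc}. prob_space.indep_vars P (\<lambda>_. Mv) (\<lambda>i. Y i j) {1..N} \<and>
        (\<forall>i\<in>{1..N}. distributed P Mv (Y i j) (\<lambda>y. ennreal (f j y))))"

definition c_hat :: "(nat \<Rightarrow> 'a \<Rightarrow> real) \<Rightarrow> (nat \<Rightarrow> nat \<Rightarrow> 'w \<Rightarrow> 'a) \<Rightarrow> nat \<Rightarrow> nat \<Rightarrow> nat \<Rightarrow> 'w \<Rightarrow> real" where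
  "c_hat \<psi> Y N j k \<omega> = (\<Sum>i=1..N. \<psi> k (Y i j \<omega>)) / real N"

definition p_hat :: "(nat \<Rightarrow> 'a \<Rightarrow> real) \<Rightarrow> ('a \<Rightarrow> real) \<Rightarrow> (nat \<Rightarrow> nat \<Rightarrow> 'w \<Rightarrow> 'a) \<Rightarrow> nat \<Rightarrow> nat
    \<Rightarrow> nat \<Rightarrow> 'a \<Rightarrow> 'w \<Rightarrow> real" where
  "p_hat \<psi> q Y N K1 j y \<omega> = (\<Sum>k=1..K1. c_hat \<psi> Y N j k \<omega> * \<psi> k y * q y)"

definition e_L2 :: "'a measure \<Rightarrow> (nat \<Rightarrow> 'a \<Rightarrow> real) \<Rightarrow> ('a \<Rightarrow> real) \<Rightarrow> (nat \<Rightarrow> 'a \<Rightarrow> real) \<Rightarrow> nat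
    \<Rightarrow> (nat \<Rightarrow> nat \<Rightarrow> 'w \<Rightarrow> 'a) \<Rightarrow> nat \<Rightarrow> nat \<Rightarrow> 'w \<Rightarrow> real" where
  "e_L2 Mv \<psi> q f Mc Y N K1 \<omega> =
     sqrt (\<Sum>j=1..Mc. LINT y|Mv. (f j y - p_hat \<psi> q Y N K1 j y \<omega>)\<^sup>2 * inverse (q y))"

definition err_bound :: "'a measure \<Rightarrow> (nat \<Rightarrow> 'a \<Rightarrow> real) \<Rightarrow> (nat \<Rightarrow> 'a \<Rightarrow> real) \<Rightarrow> nat \<Rightarrow> nat \<Rightarrow> nat \<Rightarrow> real" where
  "err_bound Mv \<psi> f Mc N K1 =
     (\<Sum>j=1..Mc. \<Sum>k. (coef Mv \<psi> (f j) (k + K1 + 1))\<^sup>2)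
     + (1 / real N) * (\<Sum>j=1..Mc. \<Sum>k=1..K1. var_psi Mv \<psi> (f j) k)"

end

theory Submission
  imports Defs
begin

(* Write g_j = p(.|theta_j) / q. The weighted error integral of e_j is the squared L2(q)-distance
   between g_j and the finite expansion sum_{k <= K1} c_hat_jk psi_k. Parseval's identity for the
   complete system psi (Bessel's inequality plus a Riesz-Fischer limit) turns it into the tail
   sum_{k > K1} c_jk^2 plus sum_{k <= K1} (c_hat_jk - c_jk)^2. The sample means c_hat_jk are
   unbiased with mean square error Var[psi_k(Y)] / N, so E[e^2] equals the right-hand side B exactly,
   whence E[e] <= sqrt B and Var[e] <= B. Finally B -> 0 when first K1 -> oo (tails of convergent
   series) and then N -> oo. *)

section \<open>Square integrability with respect to a weight\<close>

lemma abs_mult_le_weighted_squares: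
  fixes a b s :: real
  assumes "0 < s"
  shows "\<bar>a * b\<bar> \<le> (s * a\<^sup>2 + b\<^sup>2 / s) / 2"
proof -
  have "0 \<le> (s * \<bar>a\<bar> - \<bar>b\<bar>)\<^sup>2" by simp
  then have "2 * s * \<bar>a * b\<bar> \<le> s\<^sup>2 * a\<^sup>2 + b\<^sup>2"
    by (simp add: power2_diff abs_mult power_mult_distrib algebra_simps)
  with assms show ?thesis by (simp add: field_simps power2_eq_square)
qed

lemma abs_weighted_product_le:
  fixes a b w s :: real
  assumes "0 \<le> w" "0 < s"
  shows "\<bar>a * b * w\<bar> \<le> (s * (a\<^sup>2 * w) + b\<^sup>2 * w / s) / 2"
proof -
  have "\<bar>a * b\<bar> * w \<le> (s * a\<^sup>2 + b\<^sup>2 / s) / 2 * w"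
    using abs_mult_le_weighted_squares[OF assms(2)] assms(1) by (rule mult_right_mono)
  with assms(1) show ?thesis by (simp add: abs_mult algebra_simps add_divide_distrib)
qed

lemma integrable_weighted_product:
  assumes a: "L2w M w a" and b: "L2w M w b"
    and [measurable]: "w \<in> borel_measurable M" and w: "\<forall>y\<in>space M. 0 \<le> w y"
  shows "integrable M (\<lambda>y. a y * b y * w y)"
proof (rule Bochner_Integration.integrable_bound)
  show "integrable M (\<lambda>y. (1 * ((a y)\<^sup>2 * w y) + (b y)\<^sup>2 * w y / 1) / 2)"
    using a b by (auto simp: L2w_def)
  show "(\<lambda>y. a y * b y * w y) \<in> borel_measurable M"
    using a b by (auto simp: L2w_def)
  show "AE y in M. norm (a y * b y * w y) \<le> norm ((1 * ((a y)\<^sup>2 * w y) + (b y)\<^sup>2 * w y / 1) / 2)"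
    using w abs_weighted_product_le[of _ 1] by (intro AE_I2) (auto intro: order_trans)
qed

lemma abs_integral_weighted_product_le:
  assumes a: "L2w M w a" and b: "L2w M w b"
    and [measurable]: "w \<in> borel_measurable M" and w: "\<forall>y\<in>space M. 0 \<le> w y" and s: "0 < s"
  shows "\<bar>\<integral>y. a y * b y * w y \<partial>M\<bar>
    \<le> (s * (\<integral>y. (a y)\<^sup>2 * w y \<partial>M) + (\<integral>y. (b y)\<^sup>2 * w y \<partial>M) / s) / 2"
proof -
  have "\<bar>\<integral>y. a y * b y * w y \<partial>M\<bar> \<le> (\<integral>y. \<bar>a y * b y * w y\<bar> \<partial>M)"
    by (rule integral_abs_bound)
  also have "\<dots> \<le> (\<integral>y. (s * ((a y)\<^sup>2 * w y) + (b y)\<^sup>2 * w y / s) / 2 \<partial>M)"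
    using integrable_weighted_product[OF a b] a b w abs_weighted_product_le[OF _ s]
    by (intro integral_mono) (auto simp: L2w_def)
  also have "\<dots> = (s * (\<integral>y. (a y)\<^sup>2 * w y \<partial>M) + (\<integral>y. (b y)\<^sup>2 * w y \<partial>M) / s) / 2"
    using a b by (simp add: L2w_def)
  finally show ?thesis .
qed

lemma integral_weighted_sq_diff:
  assumes a: "L2w M w a" and b: "L2w M w b"
    and [measurable]: "w \<in> borel_measurable M" and w: "\<forall>y\<in>space M. 0 \<le> w y"
  shows "L2w M w (\<lambda>y. a y - b y)"
    and "(\<integral>y. (a y - b y)\<^sup>2 * w y \<partial>M) = (\<integral>y. (a y)\<^sup>2 * w y \<partial>M)
      - 2 * (\<integral>y. a y * b y * w y \<partial>M) + (\<integral>y. (b y)\<^sup>2 * w y \<partial>M)"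
proof -
  have expand: "(\<lambda>y. (a y - b y)\<^sup>2 * w y) = (\<lambda>y. (a y)\<^sup>2 * w y - 2 * (a y * b y * w y) + (b y)\<^sup>2 * w y)"
    by (simp add: power2_diff algebra_simps)
  note ab = integrable_weighted_product[OF a b, simplified, OF w]
  show "L2w M w (\<lambda>y. a y - b y)"
    using a b ab unfolding L2w_def expand by auto
  show "(\<integral>y. (a y - b y)\<^sup>2 * w y \<partial>M) = (\<integral>y. (a y)\<^sup>2 * w y \<partial>M)
      - 2 * (\<integral>y. a y * b y * w y \<partial>M) + (\<integral>y. (b y)\<^sup>2 * w y \<partial>M)"
    using a b ab unfolding L2w_def expand by simp
qed

lemma L2w_limit_bound:
  assumes F: "\<And>m. L2w M w (F m)" and [measurable]: "G \<in> borel_measurable M" "w \<in> borel_measurable M"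
    and w: "\<forall>y\<in>space M. 0 \<le> w y"
    and lim: "AE y in M. (\<lambda>m. F m y) \<longlonglongrightarrow> G y"
    and bound: "eventually (\<lambda>m. (\<integral>y. (F m y)\<^sup>2 * w y \<partial>M) \<le> C) sequentially"
  shows "L2w M w G" and "(\<integral>y. (G y)\<^sup>2 * w y \<partial>M) \<le> C"
proof -
  have [measurable]: "F m \<in> borel_measurable M" for m
    using F by (simp add: L2w_def)
  have nn_F: "(\<integral>\<^sup>+y. ennreal ((F m y)\<^sup>2 * w y) \<partial>M) = ennreal (\<integral>y. (F m y)\<^sup>2 * w y \<partial>M)" for m
    using F w by (intro nn_integral_eq_integral AE_I2) (auto simp: L2w_def)
  obtain m where "(\<integral>y. (F m y)\<^sup>2 * w y \<partial>M) \<le> C"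
    using bound eventually_sequentially by auto
  moreover have "0 \<le> (\<integral>y. (F m y)\<^sup>2 * w y \<partial>M)"
    using w by (intro integral_nonneg_AE AE_I2) auto
  ultimately have C: "0 \<le> C" by linarith
  have "(\<integral>\<^sup>+y. ennreal ((G y)\<^sup>2 * w y) \<partial>M) = (\<integral>\<^sup>+y. liminf (\<lambda>m. ennreal ((F m y)\<^sup>2 * w y)) \<partial>M)"
    using lim
  proof (intro nn_integral_cong_AE, eventually_elim)
    fix y assume "(\<lambda>m. F m y) \<longlonglongrightarrow> G y"
    then have "(\<lambda>m. ennreal ((F m y)\<^sup>2 * w y)) \<longlonglongrightarrow> ennreal ((G y)\<^sup>2 * w y)"
      by (intro tendsto_ennrealI tendsto_intros)
    then show "ennreal ((G y)\<^sup>2 * w y) = liminf (\<lambda>m. ennreal ((F m y)\<^sup>2 * w y))"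
      by (simp add: lim_imp_Liminf)
  qed
  also have "\<dots> \<le> liminf (\<lambda>m. \<integral>\<^sup>+y. ennreal ((F m y)\<^sup>2 * w y) \<partial>M)"
    by (rule nn_integral_liminf) measurable
  also have "\<dots> \<le> limsup (\<lambda>m. \<integral>\<^sup>+y. ennreal ((F m y)\<^sup>2 * w y) \<partial>M)"
    by (rule Liminf_le_Limsup) simp
  also have "\<dots> \<le> ennreal C"
    unfolding nn_F using bound by (intro Limsup_bounded) (auto elim: eventually_mono intro: ennreal_leI)
  finally have nn_G: "(\<integral>\<^sup>+y. ennreal ((G y)\<^sup>2 * w y) \<partial>M) \<le> ennreal C" .
  have "integrable M (\<lambda>y. (G y)\<^sup>2 * w y)"
  proof (rule integrableI_nonneg)
    show "AE y in M. 0 \<le> (G y)\<^sup>2 * w y" using w by (intro AE_I2) auto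
    show "(\<integral>\<^sup>+y. ennreal ((G y)\<^sup>2 * w y) \<partial>M) < \<infinity>" using nn_G by (simp add: le_less_trans)
  qed simp
  then show "L2w M w G" by (simp add: L2w_def)
  with nn_G w C show "(\<integral>y. (G y)\<^sup>2 * w y \<partial>M) \<le> C"
    by (subst (asm) nn_integral_eq_integral) (auto simp: L2w_def)
qed

lemma convergent_of_summable_scaled_sq_increments:
  fixes s :: "nat \<Rightarrow> real"
  assumes "summable (\<lambda>j. 2^j * (s (Suc j) - s j)\<^sup>2)"
  shows "convergent s"
proof -
  have "(s (Suc j) - s j)\<^sup>2 / (1/2)^j = 2^j * (s (Suc j) - s j)\<^sup>2" for j
    by (simp add: power_one_over)
  with assms have "summable (\<lambda>j. ((1/2)^j * 1\<^sup>2 + (s (Suc j) - s j)\<^sup>2 / (1/2)^j) / 2)"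
    by (intro summable_divide summable_add summable_geometric) auto
  \<comment> \<open>AM-GM: \<open>|d| \<le> (2\<^sup>-\<^sup>j + 2\<^sup>j d\<^sup>2) / 2\<close>\<close>
  then have "summable (\<lambda>j. s (Suc j) - s j)"
    by (rule summable_comparison_test[rotated])
      (use abs_mult_le_weighted_squares[of "(1/2)^_" 1] in auto)
  then have "convergent (\<lambda>J. s 0 + (\<Sum>j<J. s (Suc j) - s j))"
    by (intro convergent_add convergent_const) (simp add: summable_iff_convergent[symmetric])
  moreover have "s 0 + (\<Sum>j<J. s (Suc j) - s j) = s J" for J
    using sum_lessThan_telescope[of s J] by simp
  ultimately show ?thesis by simp
qed

lemma AE_convergent_of_fast_L2w_Cauchy:
  fixes S :: "nat \<Rightarrow> 'a \<Rightarrow> real"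
  assumes [measurable]: "\<And>j. S j \<in> borel_measurable M" "w \<in> borel_measurable M"
    and w: "\<forall>y\<in>space M. 0 < w y"
    and int: "\<And>j. integrable M (\<lambda>y. (S (Suc j) y - S j y)\<^sup>2 * w y)"
    and fast: "\<And>j. (\<integral>y. (S (Suc j) y - S j y)\<^sup>2 * w y \<partial>M) \<le> (1/4)^j"
  shows "AE y in M. convergent (\<lambda>j. S j y)"
proof -
  define B where "B j y = S (Suc j) y - S j y" for j y
  define H where "H j y = (2::real)^j * ((B j y)\<^sup>2 * w y)" for j y
  have [measurable]: "(\<lambda>y. H j y) \<in> borel_measurable M" for j
    unfolding H_def B_def by measurable
  have H_nonneg: "0 \<le> H j y" if "y \<in> space M" for j y
    using w that by (simp add: H_def less_imp_le)
  have "(\<integral>\<^sup>+y. (\<Sum>j. ennreal (H j y)) \<partial>M) = (\<Sum>j. \<integral>\<^sup>+y. ennreal (H j y) \<partial>M)"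
    by (rule nn_integral_suminf) measurable
  also have "\<dots> \<le> (\<Sum>j. ennreal ((1/2)^j))"
  proof (intro suminf_le allI)
    fix j
    have "(\<integral>\<^sup>+y. ennreal (H j y) \<partial>M) = ennreal (2^j * (\<integral>y. (B j y)\<^sup>2 * w y \<partial>M))"
      using int H_nonneg unfolding H_def B_def by (subst nn_integral_eq_integral) auto
    also have "\<dots> \<le> ennreal (2^j * (1/4)^j)"
      using fast by (intro ennreal_leI mult_left_mono) (auto simp: B_def)
    also have "(2::real)^j * (1/4)^j = (1/2)^j"
      by (simp add: power_mult_distrib[symmetric])
    finally show "(\<integral>\<^sup>+y. ennreal (H j y) \<partial>M) \<le> ennreal ((1/2)^j)" .
  qed auto
  also have "\<dots> < \<infinity>"
    using suminf_geometric[of "1/2::real"] by (subst suminf_ennreal2) auto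
  finally have "AE y in M. (\<Sum>j. ennreal (H j y)) \<noteq> \<infinity>"
    by (intro nn_integral_PInf_AE) auto
  then show ?thesis
    using AE_space
  proof eventually_elim
    fix y assume fin: "(\<Sum>j. ennreal (H j y)) \<noteq> \<infinity>" and y: "y \<in> space M"
    have "summable (\<lambda>j. H j y / w y)"
      using fin H_nonneg[OF y] by (intro summable_divide summable_suminf_not_top) auto
    moreover have "H j y / w y = 2^j * (S (Suc j) y - S j y)\<^sup>2" for j
      using w y by (auto simp: H_def B_def)
    ultimately show "convergent (\<lambda>j. S j y)"
      by (intro convergent_of_summable_scaled_sq_increments) simp
  qed
qed

lemma L2w_fast_Cauchy_limit:
  fixes S :: "nat \<Rightarrow> 'a \<Rightarrow> real"
  assumes S: "\<And>j. L2w M w (S j)" and [measurable]: "w \<in> borel_measurable M"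
    and w: "\<forall>y\<in>space M. 0 < w y"
    and fast: "\<And>j m. j \<le> m \<Longrightarrow> (\<integral>y. (S m y - S j y)\<^sup>2 * w y \<partial>M) \<le> (1/4)^j"
  obtains h where "L2w M w h" and "AE y in M. (\<lambda>j. S j y) \<longlonglongrightarrow> h y"
    and "\<And>J. (\<integral>y. (h y - S J y)\<^sup>2 * w y \<partial>M) \<le> (1/4)^J"
proof -
  have w_nonneg: "\<forall>y\<in>space M. 0 \<le> w y"
    using w by (auto intro: less_imp_le)
  have [measurable]: "S j \<in> borel_measurable M" for j
    using S by (simp add: L2w_def)
  have diff: "L2w M w (\<lambda>y. S m y - S j y)" for j m
    using integral_weighted_sq_diff(1)[OF S S _ w_nonneg] by simp
  have "AE y in M. convergent (\<lambda>j. S j y)"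
    using diff fast w by (intro AE_convergent_of_fast_L2w_Cauchy) (auto simp: L2w_def)
  then have lim: "AE y in M. (\<lambda>j. S j y) \<longlonglongrightarrow> lim (\<lambda>j. S j y)"
    by (simp add: convergent_LIMSEQ_iff)
  have [measurable]: "(\<lambda>y. lim (\<lambda>j. S j y)) \<in> borel_measurable M"
    by measurable
  have approx: "L2w M w (\<lambda>y. lim (\<lambda>j. S j y) - S J y) \<and>
      (\<integral>y. (lim (\<lambda>j. S j y) - S J y)\<^sup>2 * w y \<partial>M) \<le> (1/4)^J" for J
  proof -
    have "AE y in M. (\<lambda>m. S m y - S J y) \<longlonglongrightarrow> lim (\<lambda>j. S j y) - S J y"
      using lim by eventually_elim (intro tendsto_diff tendsto_const)
    moreover have "eventually (\<lambda>m. (\<integral>y. (S m y - S J y)\<^sup>2 * w y \<partial>M) \<le> (1/4)^J) sequentially"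
      using eventually_ge_at_top[of J] by eventually_elim (rule fast)
    ultimately show ?thesis
      using L2w_limit_bound[of M w "\<lambda>m y. S m y - S J y"] diff w_nonneg by simp
  qed
  have "L2w M w (\<lambda>y. - S 0 y)"
    using S[of 0] by (simp add: L2w_def)
  from integral_weighted_sq_diff(1)[OF approx[of 0, THEN conjunct1] this _ w_nonneg]
  have "L2w M w (\<lambda>y. lim (\<lambda>j. S j y))"
    by simp
  with approx lim show ?thesis
    using that by blast
qed

lemma sequentially_strict_mono_choice:
  assumes "\<And>j. eventually (P j) sequentially"
  obtains n :: "nat \<Rightarrow> nat" where "strict_mono n" "\<And>j N. n j \<le> N \<Longrightarrow> P j N"
proof -
  obtain m where m: "\<And>j N. m j \<le> N \<Longrightarrow> P j N"
    using assms unfolding eventually_sequentially by metis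
  define n where "n j = (\<Sum>i\<le>j. m i) + j" for j
  have "strict_mono n"
    unfolding n_def by (intro strict_monoI_Suc) simp
  moreover have "m j \<le> n j" for j
    unfolding n_def using member_le_sum[of j "{..j}" m] by auto
  ultimately show ?thesis
    using m that le_trans by blast
qed

section \<open>Sample means\<close>

lemma (in prob_space) expectation_centered_products_indep:
  fixes X :: "'i \<Rightarrow> 'a \<Rightarrow> real"
  assumes indep: "indep_vars (\<lambda>_. borel) X I" and i: "i \<in> I" and i': "i' \<in> I"
    and sq: "\<And>i. i \<in> I \<Longrightarrow> integrable M (\<lambda>\<omega>. (X i \<omega>)\<^sup>2)"
    and mean: "\<And>i. i \<in> I \<Longrightarrow> expectation (X i) = m"
    and var: "\<And>i. i \<in> I \<Longrightarrow> variance (X i) = v"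
  shows "integrable M (\<lambda>\<omega>. (X i \<omega> - m) * (X i' \<omega> - m))"
    and "expectation (\<lambda>\<omega>. (X i \<omega> - m) * (X i' \<omega> - m)) = (if i = i' then v else 0)"
proof -
  define Z where "Z = (\<lambda>i \<omega>. X i \<omega> - m)"
  have X_meas: "X j \<in> borel_measurable M" if "j \<in> I" for j
    using indep that unfolding indep_vars_def2 by auto
  have X_int: "integrable M (X j)" if "j \<in> I" for j
    using square_integrable_imp_integrable[OF X_meas[OF that] sq[OF that]] .
  have centered: "integrable M (Z j) \<and> expectation (Z j) = 0" if "j \<in> I" for j
    using X_int[OF that] mean[OF that] by (simp add: Z_def prob_space)
  have "integrable M (\<lambda>\<omega>. Z i \<omega> * Z i' \<omega>) \<and>
      expectation (\<lambda>\<omega>. Z i \<omega> * Z i' \<omega>) = (if i = i' then v else 0)"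
  proof (cases "i = i'")
    case True
    have "(\<lambda>\<omega>. Z i \<omega> * Z i \<omega>) = (\<lambda>\<omega>. (X i \<omega>)\<^sup>2 - 2 * m * X i \<omega> + m\<^sup>2)"
      by (simp add: Z_def power2_eq_square algebra_simps)
    with True X_int[OF i] sq[OF i] var[OF i] mean[OF i] show ?thesis
      by (simp add: Z_def power2_eq_square)
  next
    case False
    have "indep_vars (\<lambda>_. borel) Z {i, i'}"
      unfolding Z_def by (rule indep_vars_compose2[OF indep_vars_subset[OF indep]]) (use i i' in auto)
    then have "indep_var borel (Z i) borel (\<lambda>\<omega>. \<Sum>j\<in>{i'}. Z j \<omega>)"
      using False by (intro indep_vars_sum) auto
    then have Z_Z': "indep_var borel (Z i) borel (Z i')" by simp
    then show ?thesis
      using False centered[OF i] centered[OF i']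
        indep_var_lebesgue_integral[OF Z_Z'] indep_var_integrable[OF Z_Z'] by simp
  qed
  then show "integrable M (\<lambda>\<omega>. (X i \<omega> - m) * (X i' \<omega> - m))"
    and "expectation (\<lambda>\<omega>. (X i \<omega> - m) * (X i' \<omega> - m)) = (if i = i' then v else 0)"
    by (simp_all add: Z_def)
qed

lemma (in prob_space) expectation_sq_dev_mean_indep:
  fixes X :: "'i \<Rightarrow> 'a \<Rightarrow> real"
  assumes indep: "indep_vars (\<lambda>_. borel) X I" and I: "finite I" "I \<noteq> {}"
    and sq: "\<And>i. i \<in> I \<Longrightarrow> integrable M (\<lambda>\<omega>. (X i \<omega>)\<^sup>2)"
    and mean: "\<And>i. i \<in> I \<Longrightarrow> expectation (X i) = m"
    and var: "\<And>i. i \<in> I \<Longrightarrow> variance (X i) = v"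
  shows "integrable M (\<lambda>\<omega>. ((\<Sum>i\<in>I. X i \<omega>) / card I - m)\<^sup>2)"
    and "expectation (\<lambda>\<omega>. ((\<Sum>i\<in>I. X i \<omega>) / card I - m)\<^sup>2) = v / card I"
proof -
  note cov = expectation_centered_products_indep[OF indep _ _ sq mean var]
  have n: "real (card I) > 0" using I by (simp add: card_gt_0_iff)
  have "(\<Sum>i\<in>I. X i \<omega>) / card I - m = (\<Sum>i\<in>I. X i \<omega> - m) / card I" for \<omega>
    using n by (simp add: sum_subtractf field_simps)
  then have sq_eq: "((\<Sum>i\<in>I. X i \<omega>) / card I - m)\<^sup>2
      = (\<Sum>i\<in>I. \<Sum>i'\<in>I. (X i \<omega> - m) * (X i' \<omega> - m)) / (card I)\<^sup>2" for \<omega>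
    by (simp add: power_divide power2_eq_square sum_product)
  show "integrable M (\<lambda>\<omega>. ((\<Sum>i\<in>I. X i \<omega>) / card I - m)\<^sup>2)"
    unfolding sq_eq using cov(1) by auto
  have "expectation (\<lambda>\<omega>. ((\<Sum>i\<in>I. X i \<omega>) / card I - m)\<^sup>2)
      = (\<Sum>i\<in>I. \<Sum>i'\<in>I. if i = i' then v else 0) / (card I)\<^sup>2"
    unfolding sq_eq using cov
    by (simp add: Bochner_Integration.integral_sum Bochner_Integration.integrable_sum)
  also have "\<dots> = v / card I"
    using I n by (simp add: power2_eq_square)
  finally show "expectation (\<lambda>\<omega>. ((\<Sum>i\<in>I. X i \<omega>) / card I - m)\<^sup>2) = v / card I" .
qed

lemma (in prob_space) distributed_moments:
  assumes Y: "distributed M N Y (\<lambda>y. ennreal (f y))"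
    and f: "\<forall>y\<in>space N. 0 \<le> f y" "integrable N f" and \<phi>: "L2w N f \<phi>"
  shows "integrable M (\<lambda>\<omega>. (\<phi> (Y \<omega>))\<^sup>2)"
    and "expectation (\<lambda>\<omega>. \<phi> (Y \<omega>)) = (\<integral>y. f y * \<phi> y \<partial>N)"
    and "variance (\<lambda>\<omega>. \<phi> (Y \<omega>)) = (\<integral>y. f y * (\<phi> y)\<^sup>2 \<partial>N) - (\<integral>y. f y * \<phi> y \<partial>N)\<^sup>2"
proof -
  have [measurable]: "f \<in> borel_measurable N" "\<phi> \<in> borel_measurable N"
    using f \<phi> by (auto simp: L2w_def)
  have "integrable N (\<lambda>y. \<phi> y * 1 * f y)"
    using f \<phi> by (intro integrable_weighted_product) (auto simp: L2w_def)
  then have int1: "integrable N (\<lambda>y. f y * \<phi> y)"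
    by (simp add: mult.commute)
  have int2: "integrable N (\<lambda>y. f y * (\<phi> y)\<^sup>2)"
    using \<phi> by (simp add: L2w_def mult.commute)
  have [measurable]: "(\<lambda>y. (\<phi> y)\<^sup>2) \<in> borel_measurable N" by measurable
  note integrable_transfer = distributed_integrable[OF Y _ f(1)[rule_format]]
  note integral_transfer = distributed_integral[OF Y _ f(1)[rule_format]]
  have int: "integrable M (\<lambda>\<omega>. \<phi> (Y \<omega>))"
    using integrable_transfer[of \<phi>] int1 by simp
  show sq: "integrable M (\<lambda>\<omega>. (\<phi> (Y \<omega>))\<^sup>2)"
    using integrable_transfer[of "\<lambda>y. (\<phi> y)\<^sup>2"] int2 by simp
  show mean: "expectation (\<lambda>\<omega>. \<phi> (Y \<omega>)) = (\<integral>y. f y * \<phi> y \<partial>N)"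
    using integral_transfer[of \<phi>] by simp
  have "expectation (\<lambda>\<omega>. (\<phi> (Y \<omega>))\<^sup>2) = (\<integral>y. f y * (\<phi> y)\<^sup>2 \<partial>N)"
    using integral_transfer[of "\<lambda>y. (\<phi> y)\<^sup>2"] by simp
  with variance_eq[OF int sq] mean
  show "variance (\<lambda>\<omega>. \<phi> (Y \<omega>)) = (\<integral>y. f y * (\<phi> y)\<^sup>2 \<partial>N) - (\<integral>y. f y * \<phi> y \<partial>N)\<^sup>2"
    by simp
qed

lemma (in prob_space) moments_le_of_second_moment_le:
  fixes X :: "'a \<Rightarrow> real"
  assumes X: "X \<in> borel_measurable M" and sq: "integrable M (\<lambda>\<omega>. (X \<omega>)\<^sup>2)"
    and B: "expectation (\<lambda>\<omega>. (X \<omega>)\<^sup>2) \<le> B"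
  shows "integrable M X" and "expectation X \<le> sqrt B" and "variance X \<le> B"
proof -
  show int: "integrable M X"
    by (rule square_integrable_imp_integrable[OF X sq])
  have var: "variance X = expectation (\<lambda>\<omega>. (X \<omega>)\<^sup>2) - (expectation X)\<^sup>2"
    by (rule variance_eq[OF int sq])
  then show "variance X \<le> B"
    using B zero_le_power2[of "expectation X"] by linarith
  have "expectation X \<le> sqrt ((expectation X)\<^sup>2)" by simp
  also have "\<dots> \<le> sqrt B"
    using var variance_positive[of X] B by (intro real_sqrt_le_mono) linarith
  finally show "expectation X \<le> sqrt B" .
qed

lemma mean_square_error_c_hat:
  assumes iid: "iid_samples P Mv Y N Mc f" and j: "j \<in> {1..Mc}" and N: "N \<ge> 1"
    and dens: "prob_density Mv (f j)" and \<psi>: "\<psi> k \<in> borel_measurable Mv"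
    and var_fin: "integrable Mv (\<lambda>y. f j y * (\<psi> k y)\<^sup>2)"
  shows "integrable P (\<lambda>\<omega>. (c_hat \<psi> Y N j k \<omega> - coef Mv \<psi> (f j) k)\<^sup>2)"
    and "prob_space.expectation P (\<lambda>\<omega>. (c_hat \<psi> Y N j k \<omega> - coef Mv \<psi> (f j) k)\<^sup>2)
      = var_psi Mv \<psi> (f j) k / N"
proof -
  interpret prob_space P
    using iid by (simp add: iid_samples_def)
  have indep: "indep_vars (\<lambda>_. Mv) (\<lambda>i. Y i j) {1..N}"
    and distr: "\<And>i. i \<in> {1..N} \<Longrightarrow> distributed P Mv (Y i j) (\<lambda>y. ennreal (f j y))"
    using iid j by (auto simp: iid_samples_def)
  have f: "\<forall>y\<in>space Mv. 0 \<le> f j y" "integrable Mv (f j)"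
    using dens by (auto simp: prob_density_def)
  have "L2w Mv (f j) (\<psi> k)"
    using \<psi> var_fin by (simp add: L2w_def mult.commute)
  note moments = distributed_moments[OF distr f this]
  have "indep_vars (\<lambda>_. borel) (\<lambda>i \<omega>. \<psi> k (Y i j \<omega>)) {1..N}"
    using indep \<psi> by (rule indep_vars_compose2)
  note mse = expectation_sq_dev_mean_indep[OF this, of "coef Mv \<psi> (f j) k" "var_psi Mv \<psi> (f j) k"]
  show "integrable P (\<lambda>\<omega>. (c_hat \<psi> Y N j k \<omega> - coef Mv \<psi> (f j) k)\<^sup>2)"
    using mse(1) moments N by (simp add: c_hat_def coef_def var_psi_def)
  show "expectation (\<lambda>\<omega>. (c_hat \<psi> Y N j k \<omega> - coef Mv \<psi> (f j) k)\<^sup>2) = var_psi Mv \<psi> (f j) k / N"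
    using mse(2) moments N by (simp add: c_hat_def coef_def var_psi_def)
qed

section \<open>Convergence of the error bound\<close>

lemma err_bound_eventually_less:
  assumes summable: "\<forall>j\<in>{1..Mc}. summable (\<lambda>k. (coef Mv \<psi> (f j) (Suc k))\<^sup>2)" and \<delta>: "0 < \<delta>"
  obtains K where "1 \<le> K" and "eventually (\<lambda>N. err_bound Mv \<psi> f Mc N K < \<delta>) sequentially"
proof -
  define R where "R K = (\<Sum>j=1..Mc. \<Sum>k. (coef Mv \<psi> (f j) (k + K + 1))\<^sup>2)" for K
  have "(\<lambda>K. \<Sum>k. (coef Mv \<psi> (f j) (k + K + 1))\<^sup>2) \<longlonglongrightarrow> 0" if "j \<in> {1..Mc}" for j
    using suminf_exist_split2[OF summable[rule_format, OF that]] by simp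
  then have "R \<longlonglongrightarrow> (\<Sum>j=1..Mc. 0)"
    unfolding R_def by (intro tendsto_sum)
  then have "eventually (\<lambda>K. R K < \<delta> / 2) sequentially"
    using \<delta> by (intro order_tendstoD) auto
  then obtain K where K: "1 \<le> K" "R K < \<delta> / 2"
    unfolding eventually_sequentially by (metis max.cobounded1 max.cobounded2)
  define W where "W = (\<Sum>j=1..Mc. \<Sum>k=1..K. var_psi Mv \<psi> (f j) k)"
  have "eventually (\<lambda>N. W / real N < \<delta> / 2) sequentially"
    using order_tendstoD(2)[OF lim_const_over_n[of W], of "\<delta> / 2"] \<delta> by simp
  then have "eventually (\<lambda>N. err_bound Mv \<psi> f Mc N K < \<delta>) sequentially"
  proof (rule eventually_mono)
    fix N assume "W / real N < \<delta> / 2"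
    moreover have "err_bound Mv \<psi> f Mc N K = R K + W / real N"
      by (simp add: err_bound_def R_def W_def)
    ultimately show "err_bound Mv \<psi> f Mc N K < \<delta>"
      using K(2) by linarith
  qed
  with K(1) show thesis
    by (rule that)
qed

section \<open>Expansions in a complete orthonormal system\<close>

context
  fixes Mv :: "'a measure" and q :: "'a \<Rightarrow> real" and \<psi> :: "nat \<Rightarrow> 'a \<Rightarrow> real"
  assumes q_meas[measurable]: "q \<in> borel_measurable Mv"
    and q_pos: "\<forall>y\<in>space Mv. 0 < q y"
    and onb: "complete_orthonormal Mv q \<psi>"
begin

lemma q_nonneg: "\<forall>y\<in>space Mv. 0 \<le> q y"
  using q_pos by (auto intro: less_imp_le)

lemma psi_measurable: "k \<ge> 1 \<Longrightarrow> \<psi> k \<in> borel_measurable Mv"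
  using onb by (simp add: complete_orthonormal_def)

lemma integral_psi_psi:
  assumes "k \<ge> 1" "l \<ge> 1"
  shows "integrable Mv (\<lambda>y. \<psi> k y * \<psi> l y * q y)"
    and "(\<integral>y. \<psi> k y * \<psi> l y * q y \<partial>Mv) = (if k = l then 1 else 0)"
  using onb assms by (simp_all add: complete_orthonormal_def)

lemma psi_complete:
  assumes "L2w Mv q f" "\<And>k. k \<ge> 1 \<Longrightarrow> (\<integral>y. f y * \<psi> k y * q y \<partial>Mv) = 0"
  shows "AE y in Mv. f y = 0"
  using onb assms by (simp add: complete_orthonormal_def)

lemma L2w_psi: "k \<ge> 1 \<Longrightarrow> L2w Mv q (\<psi> k)"
  using psi_measurable integral_psi_psi(1)[of k k] by (simp add: L2w_def power2_eq_square)

lemma integral_psi_combination_mult: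
  assumes F: "finite F" "\<forall>k\<in>F. k \<ge> 1" and G: "finite G" "\<forall>l\<in>G. l \<ge> 1"
  shows "integrable Mv (\<lambda>y. (\<Sum>k\<in>F. a k * \<psi> k y) * (\<Sum>l\<in>G. b l * \<psi> l y) * q y)"
    and "(\<integral>y. (\<Sum>k\<in>F. a k * \<psi> k y) * (\<Sum>l\<in>G. b l * \<psi> l y) * q y \<partial>Mv) = (\<Sum>k\<in>F \<inter> G. a k * b k)"
proof -
  have expand: "(\<lambda>y. (\<Sum>k\<in>F. a k * \<psi> k y) * (\<Sum>l\<in>G. b l * \<psi> l y) * q y)
      = (\<lambda>y. \<Sum>k\<in>F. \<Sum>l\<in>G. a k * b l * (\<psi> k y * \<psi> l y * q y))"
    by (simp add: fun_eq_iff sum_distrib_left sum_distrib_right mult_ac sum.swap[of _ G])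
  have int: "integrable Mv (\<lambda>y. a k * b l * (\<psi> k y * \<psi> l y * q y))" if "k \<in> F" "l \<in> G" for k l
    using integral_psi_psi(1) F G that by simp
  show "integrable Mv (\<lambda>y. (\<Sum>k\<in>F. a k * \<psi> k y) * (\<Sum>l\<in>G. b l * \<psi> l y) * q y)"
    unfolding expand using int by (intro Bochner_Integration.integrable_sum) auto
  have "(\<integral>y. (\<Sum>k\<in>F. a k * \<psi> k y) * (\<Sum>l\<in>G. b l * \<psi> l y) * q y \<partial>Mv)
      = (\<Sum>k\<in>F. \<Sum>l\<in>G. a k * b l * (if k = l then 1 else 0))"
    unfolding expand using int integral_psi_psi(2) F G
    by (simp add: Bochner_Integration.integral_sum Bochner_Integration.integrable_sum)
  also have "\<dots> = (\<Sum>k\<in>F \<inter> G. a k * b k)"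
    using F G by (simp add: if_distrib sum.If_cases Int_def cong: if_cong)
  finally show "(\<integral>y. (\<Sum>k\<in>F. a k * \<psi> k y) * (\<Sum>l\<in>G. b l * \<psi> l y) * q y \<partial>Mv) = (\<Sum>k\<in>F \<inter> G. a k * b k)" .
qed

lemma L2w_psi_combination:
  assumes "finite F" "\<forall>k\<in>F. k \<ge> 1"
  shows "L2w Mv q (\<lambda>y. \<Sum>k\<in>F. a k * \<psi> k y)"
    and "(\<integral>y. (\<Sum>k\<in>F. a k * \<psi> k y)\<^sup>2 * q y \<partial>Mv) = (\<Sum>k\<in>F. (a k)\<^sup>2)"
  using integral_psi_combination_mult[OF assms assms, of a a] psi_measurable assms
  by (auto simp: L2w_def power2_eq_square intro!: borel_measurable_sum borel_measurable_times)

lemma integral_psi_combination_psi: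
  assumes "finite F" "\<forall>k\<in>F. k \<ge> 1" "l \<ge> 1"
  shows "(\<integral>y. (\<Sum>k\<in>F. a k * \<psi> k y) * \<psi> l y * q y \<partial>Mv) = (if l \<in> F then a l else 0)"
  using integral_psi_combination_mult(2)[OF assms(1,2), where G="{l}" and b="\<lambda>_. 1" and a=a] assms(3)
  by (auto simp: Int_insert_right)

lemma integral_sq_diff_psi_partial_sums:
  assumes "n \<le> m"
  shows "(\<integral>y. ((\<Sum>k=1..m. c k * \<psi> k y) - (\<Sum>k=1..n. c k * \<psi> k y))\<^sup>2 * q y \<partial>Mv)
    = (\<Sum>k=1..m. (c k)\<^sup>2) - (\<Sum>k=1..n. (c k)\<^sup>2)"
proof -
  have split: "{1..m} = {1..n} \<union> {n<..m}" using assms by auto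
  have "(\<Sum>k=1..m. c k * \<psi> k y) - (\<Sum>k=1..n. c k * \<psi> k y) = (\<Sum>k\<in>{n<..m}. c k * \<psi> k y)" for y
    unfolding split by (subst sum.union_disjoint) auto
  moreover have "(\<Sum>k=1..m. (c k)\<^sup>2) - (\<Sum>k=1..n. (c k)\<^sup>2) = (\<Sum>k\<in>{n<..m}. (c k)\<^sup>2)"
    unfolding split by (subst sum.union_disjoint) auto
  ultimately show ?thesis
    using L2w_psi_combination(2)[of "{n<..m}" c] by simp
qed

lemma integral_sq_diff_psi_combination:
  assumes g: "L2w Mv q g" and F: "finite F" "\<forall>k\<in>F. k \<ge> 1"
  shows "(\<integral>y. (g y - (\<Sum>k\<in>F. a k * \<psi> k y))\<^sup>2 * q y \<partial>Mv)
    = (\<integral>y. (g y)\<^sup>2 * q y \<partial>Mv) - 2 * (\<Sum>k\<in>F. a k * (\<integral>y. g y * \<psi> k y * q y \<partial>Mv))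
      + (\<Sum>k\<in>F. (a k)\<^sup>2)"
proof -
  have "(\<lambda>y. g y * (\<Sum>k\<in>F. a k * \<psi> k y) * q y) = (\<lambda>y. \<Sum>k\<in>F. a k * (g y * \<psi> k y * q y))"
    by (simp add: fun_eq_iff sum_distrib_left sum_distrib_right mult_ac)
  moreover have "integrable Mv (\<lambda>y. g y * \<psi> k y * q y)" if "k \<in> F" for k
    using integrable_weighted_product[OF g L2w_psi q_meas q_nonneg] F that by auto
  ultimately have "(\<integral>y. g y * (\<Sum>k\<in>F. a k * \<psi> k y) * q y \<partial>Mv)
      = (\<Sum>k\<in>F. a k * (\<integral>y. g y * \<psi> k y * q y \<partial>Mv))"
    by (simp add: Bochner_Integration.integral_sum Bochner_Integration.integrable_sum)
  then show ?thesis
    using integral_weighted_sq_diff(2)[OF g L2w_psi_combination(1)[OF F] q_meas q_nonneg]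
      L2w_psi_combination(2)[OF F] by simp
qed

lemma bessel_inequality:
  assumes g: "L2w Mv q g"
  shows "(\<Sum>k=1..n. (\<integral>y. g y * \<psi> k y * q y \<partial>Mv)\<^sup>2) \<le> (\<integral>y. (g y)\<^sup>2 * q y \<partial>Mv)"
proof -
  define c where "c k = (\<integral>y. g y * \<psi> k y * q y \<partial>Mv)" for k
  have "0 \<le> (\<integral>y. (g y - (\<Sum>k=1..n. c k * \<psi> k y))\<^sup>2 * q y \<partial>Mv)"
    using q_nonneg by (intro integral_nonneg_AE AE_I2) auto
  also have "\<dots> = (\<integral>y. (g y)\<^sup>2 * q y \<partial>Mv) - (\<Sum>k=1..n. (c k)\<^sup>2)"
    using integral_sq_diff_psi_combination[OF g, of "{1..n}" c] by (simp add: c_def power2_eq_square)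
  finally show ?thesis by (simp add: c_def)
qed

lemma summable_psi_coefficients:
  assumes "L2w Mv q g"
  shows "summable (\<lambda>k. (\<integral>y. g y * \<psi> (Suc k) y * q y \<partial>Mv)\<^sup>2)"
  using bessel_inequality[OF assms] by (intro summableI_nonneg_bounded) (auto simp: sum.atLeast1_atMost_eq)

lemma psi_coefficient_of_fast_approx:
  assumes h: "L2w Mv q h" and S: "\<And>J. L2w Mv q (S J)" and k: "k \<ge> 1"
    and approx: "eventually (\<lambda>J. (\<integral>y. (h y - S J y)\<^sup>2 * q y \<partial>Mv) \<le> (1/4)^J
      \<and> (\<integral>y. S J y * \<psi> k y * q y \<partial>Mv) = c) sequentially"
  shows "(\<integral>y. h y * \<psi> k y * q y \<partial>Mv) = c"
proof -
  have psi_norm: "(\<integral>y. (\<psi> k y)\<^sup>2 * q y \<partial>Mv) = 1"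
    using integral_psi_psi(2)[OF k k] by (simp add: power2_eq_square)
  have "eventually (\<lambda>J. \<bar>(\<integral>y. h y * \<psi> k y * q y \<partial>Mv) - c\<bar> \<le> (1/2)^J) sequentially"
    using approx
  proof eventually_elim
    case (elim J)
    note diff = integral_weighted_sq_diff(1)[OF h S q_meas q_nonneg]
    have "(\<integral>y. h y * \<psi> k y * q y \<partial>Mv) - c = (\<integral>y. (h y - S J y) * \<psi> k y * q y \<partial>Mv)"
      using elim integrable_weighted_product[OF h L2w_psi[OF k] q_meas q_nonneg]
        integrable_weighted_product[OF S L2w_psi[OF k] q_meas q_nonneg]
      by (simp add: left_diff_distrib)
    also have "\<bar>\<dots>\<bar> \<le> (2^J * (\<integral>y. (h y - S J y)\<^sup>2 * q y \<partial>Mv) + 1 / 2^J) / 2"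
      using abs_integral_weighted_product_le[OF diff L2w_psi[OF k] q_meas q_nonneg, of "2^J"]
      by (simp add: psi_norm)
    also have "\<dots> \<le> (2^J * (1/4)^J + 1 / 2^J) / 2"
      using elim by (intro divide_right_mono add_right_mono mult_left_mono) auto
    also have "\<dots> = (1/2)^J"
      by (simp add: power_divide field_simps flip: power_mult_distrib)
    finally show ?case .
  qed
  then have "\<bar>(\<integral>y. h y * \<psi> k y * q y \<partial>Mv) - c\<bar> \<le> 0"
    by (intro tendsto_le[OF trivial_limit_sequentially LIMSEQ_realpow_zero tendsto_const]) auto
  then show ?thesis by simp
qed

lemma riesz_fischer:
  fixes c :: "nat \<Rightarrow> real"
  assumes summable: "summable (\<lambda>k. (c (Suc k))\<^sup>2)"
  obtains h where "L2w Mv q h" and "\<And>k. k \<ge> 1 \<Longrightarrow> (\<integral>y. h y * \<psi> k y * q y \<partial>Mv) = c k"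
    and "(\<integral>y. (h y)\<^sup>2 * q y \<partial>Mv) \<le> (\<Sum>k. (c (Suc k))\<^sup>2)"
proof -
  define L where "L = (\<Sum>k. (c (Suc k))\<^sup>2)"
  define P where "P n = (\<Sum>k=1..n. (c k)\<^sup>2)" for n
  define T where "T = (\<lambda>n y. \<Sum>k=1..n. c k * \<psi> k y)"
  have P_lim: "P \<longlonglongrightarrow> L"
    using summable_LIMSEQ[OF summable] unfolding P_def L_def One_nat_def sum.atLeast1_atMost_eq .
  have P_le: "P n \<le> L" for n
    using sum_le_suminf[OF summable, of "{..<n}"] by (simp add: P_def L_def sum.atLeast1_atMost_eq)
  have T: "L2w Mv q (T n)" "(\<integral>y. (T n y)\<^sup>2 * q y \<partial>Mv) = P n" for n
    using L2w_psi_combination[of "{1..n}" c] by (auto simp: T_def P_def)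
  have T_diff: "(\<integral>y. (T m y - T n y)\<^sup>2 * q y \<partial>Mv) = P m - P n" if "n \<le> m" for n m
    using integral_sq_diff_psi_partial_sums[OF that] by (simp add: T_def P_def)
  \<comment> \<open>Along a subsequence whose tails drop below \<open>4\<^sup>-\<^sup>j\<close> the partial sums converge a.e.\<close>
  have "eventually (\<lambda>N. L - P N < (1/4)^j) sequentially" for j
    using order_tendstoD(1)[OF P_lim, of "L - (1/4)^j"] by (auto elim: eventually_mono)
  then obtain n where n: "strict_mono n" "\<And>j N. n j \<le> N \<Longrightarrow> L - P N < (1/4)^j"
    by (rule sequentially_strict_mono_choice[where P="\<lambda>j N. L - P N < (1/4)^j"]) blast
  define S where "S = (\<lambda>j. T (n j))"
  have fast: "(\<integral>y. (S m y - S j y)\<^sup>2 * q y \<partial>Mv) \<le> (1/4)^j" if "j \<le> m" for j m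
    using T_diff[of "n j" "n m"] P_le[of "n m"] n(2)[of j "n j"] strict_mono_less_eq[OF n(1)] that
    by (simp add: S_def)
  obtain h where h: "L2w Mv q h" "AE y in Mv. (\<lambda>j. S j y) \<longlonglongrightarrow> h y"
    and h_approx: "\<And>J. (\<integral>y. (h y - S J y)\<^sup>2 * q y \<partial>Mv) \<le> (1/4)^J"
    using L2w_fast_Cauchy_limit[of Mv q S] T(1) q_pos fast by (auto simp: S_def)
  have "(\<integral>y. (h y)\<^sup>2 * q y \<partial>Mv) \<le> L"
    using L2w_limit_bound(2)[of Mv q S h L] h T P_le q_nonneg by (simp add: S_def L2w_def)
  moreover have "(\<integral>y. h y * \<psi> k y * q y \<partial>Mv) = c k" if k: "k \<ge> 1" for k
  proof (rule psi_coefficient_of_fast_approx[OF h(1) _ k])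
    show "L2w Mv q (S J)" for J
      using T(1) by (simp add: S_def)
    have "(\<integral>y. S J y * \<psi> k y * q y \<partial>Mv) = c k" if "k \<le> J" for J
      using integral_psi_combination_psi[of "{1..n J}" k c] k that seq_suble[OF n(1), of J]
      by (simp add: S_def T_def)
    then show "eventually (\<lambda>J. (\<integral>y. (h y - S J y)\<^sup>2 * q y \<partial>Mv) \<le> (1/4)^J
        \<and> (\<integral>y. S J y * \<psi> k y * q y \<partial>Mv) = c k) sequentially"
      using h_approx by (intro eventually_sequentiallyI[of k]) simp
  qed
  ultimately show ?thesis
    using that h(1) by (simp add: L_def)
qed

lemma parseval:
  assumes g: "L2w Mv q g"
  shows "(\<integral>y. (g y)\<^sup>2 * q y \<partial>Mv) = (\<Sum>k. (\<integral>y. g y * \<psi> (Suc k) y * q y \<partial>Mv)\<^sup>2)"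
proof (rule antisym)
  define c where "c k = (\<integral>y. g y * \<psi> k y * q y \<partial>Mv)" for k
  have summable: "summable (\<lambda>k. (c (Suc k))\<^sup>2)"
    using summable_psi_coefficients[OF g] by (simp add: c_def)
  show "(\<Sum>k. (\<integral>y. g y * \<psi> (Suc k) y * q y \<partial>Mv)\<^sup>2) \<le> (\<integral>y. (g y)\<^sup>2 * q y \<partial>Mv)"
    using suminf_le_const[OF summable] bessel_inequality[OF g]
    by (simp add: c_def sum.atLeast1_atMost_eq)
  obtain h where h: "L2w Mv q h" "\<And>k. k \<ge> 1 \<Longrightarrow> (\<integral>y. h y * \<psi> k y * q y \<partial>Mv) = c k"
    and h_norm: "(\<integral>y. (h y)\<^sup>2 * q y \<partial>Mv) \<le> (\<Sum>k. (c (Suc k))\<^sup>2)"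
    using riesz_fischer[OF summable] by blast
  have "(\<integral>y. (g y - h y) * \<psi> k y * q y \<partial>Mv) = 0" if k: "k \<ge> 1" for k
    using integrable_weighted_product[OF g L2w_psi[OF k] q_meas q_nonneg]
      integrable_weighted_product[OF h(1) L2w_psi[OF k] q_meas q_nonneg] h(2)[OF k]
    by (simp add: c_def left_diff_distrib)
  then have "AE y in Mv. g y - h y = 0"
    by (rule psi_complete[OF integral_weighted_sq_diff(1)[OF g h(1) q_meas q_nonneg]])
  then have "(\<integral>y. (g y)\<^sup>2 * q y \<partial>Mv) = (\<integral>y. (h y)\<^sup>2 * q y \<partial>Mv)"
    by (intro integral_cong_AE) (use g h(1) in \<open>auto simp: L2w_def\<close>)
  with h_norm show "(\<integral>y. (g y)\<^sup>2 * q y \<partial>Mv) \<le> (\<Sum>k. (\<integral>y. g y * \<psi> (Suc k) y * q y \<partial>Mv)\<^sup>2)"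
    by (simp add: c_def)
qed

lemma L2w_divide_weight:
  assumes f: "L2w Mv (\<lambda>y. inverse (q y)) f"
  shows "L2w Mv q (\<lambda>y. f y / q y)"
    and "(\<integral>y. f y / q y * \<psi> k y * q y \<partial>Mv) = coef Mv \<psi> f k"
    and "(\<integral>y. (f y - a y * q y)\<^sup>2 * inverse (q y) \<partial>Mv) = (\<integral>y. (f y / q y - a y)\<^sup>2 * q y \<partial>Mv)"
proof -
  have [measurable]: "f \<in> borel_measurable Mv"
    using f by (simp add: L2w_def)
  have "integrable Mv (\<lambda>y. (f y / q y)\<^sup>2 * q y)"
    using f q_pos by (subst Bochner_Integration.integrable_cong[OF refl, where g="\<lambda>y. (f y)\<^sup>2 * inverse (q y)"])
      (auto simp: L2w_def field_simps power2_eq_square)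
  then show "L2w Mv q (\<lambda>y. f y / q y)"
    by (simp add: L2w_def)
  show "(\<integral>y. f y / q y * \<psi> k y * q y \<partial>Mv) = coef Mv \<psi> f k"
    unfolding coef_def using q_pos by (intro Bochner_Integration.integral_cong) auto
  show "(\<integral>y. (f y - a y * q y)\<^sup>2 * inverse (q y) \<partial>Mv) = (\<integral>y. (f y / q y - a y)\<^sup>2 * q y \<partial>Mv)"
    using q_pos by (intro Bochner_Integration.integral_cong) (auto simp: field_simps power2_eq_square)
qed

lemma summable_coef_sq:
  assumes "L2w Mv (\<lambda>y. inverse (q y)) f"
  shows "summable (\<lambda>k. (coef Mv \<psi> f (Suc k))\<^sup>2)"
  using summable_psi_coefficients[OF L2w_divide_weight(1)[OF assms]]
  unfolding L2w_divide_weight(2)[OF assms] .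

lemma integral_sq_approx_error:
  assumes f: "L2w Mv (\<lambda>y. inverse (q y)) f"
  shows "(\<integral>y. (f y - (\<Sum>k=1..K. a k * \<psi> k y * q y))\<^sup>2 * inverse (q y) \<partial>Mv)
    = (\<Sum>k. (coef Mv \<psi> f (k + K + 1))\<^sup>2) + (\<Sum>k=1..K. (a k - coef Mv \<psi> f k)\<^sup>2)"
proof -
  define c where "c = coef Mv \<psi> f"
  note g = L2w_divide_weight[OF f]
  have "(\<integral>y. (f y - (\<Sum>k=1..K. a k * \<psi> k y * q y))\<^sup>2 * inverse (q y) \<partial>Mv)
      = (\<integral>y. (f y / q y - (\<Sum>k=1..K. a k * \<psi> k y))\<^sup>2 * q y \<partial>Mv)"
    using g(3)[of "\<lambda>y. \<Sum>k=1..K. a k * \<psi> k y"] by (simp add: sum_distrib_right)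
  also have "\<dots> = (\<integral>y. (f y / q y)\<^sup>2 * q y \<partial>Mv) - 2 * (\<Sum>k=1..K. a k * c k) + (\<Sum>k=1..K. (a k)\<^sup>2)"
    using integral_sq_diff_psi_combination[OF g(1), of "{1..K}" a] unfolding g(2) by (simp add: c_def)
  also have "(\<integral>y. (f y / q y)\<^sup>2 * q y \<partial>Mv) = (\<Sum>k. (c (k + K + 1))\<^sup>2) + (\<Sum>k=1..K. (c k)\<^sup>2)"
    using parseval[OF g(1)] suminf_split_initial_segment[OF summable_coef_sq[OF f], of K]
    unfolding g(2) by (simp add: c_def sum.atLeast1_atMost_eq)
  finally show ?thesis
    by (simp add: c_def power2_diff sum.distrib sum_subtractf sum_distrib_left algebra_simps)
qed

lemma e_L2_eq:
  assumes L2: "\<forall>j\<in>{1..Mc}. L2w Mv (\<lambda>y. inverse (q y)) (f j)"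
  shows "e_L2 Mv \<psi> q f Mc Y N K \<omega> = sqrt (\<Sum>j=1..Mc. (\<Sum>k. (coef Mv \<psi> (f j) (k + K + 1))\<^sup>2)
    + (\<Sum>k=1..K. (c_hat \<psi> Y N j k \<omega> - coef Mv \<psi> (f j) k)\<^sup>2))"
    and "0 \<le> (\<Sum>j=1..Mc. (\<Sum>k. (coef Mv \<psi> (f j) (k + K + 1))\<^sup>2)
    + (\<Sum>k=1..K. (c_hat \<psi> Y N j k \<omega> - coef Mv \<psi> (f j) k)\<^sup>2))"
proof -
  have "(\<Sum>j=1..Mc. \<integral>y. (f j y - p_hat \<psi> q Y N K j y \<omega>)\<^sup>2 * inverse (q y) \<partial>Mv)
      = (\<Sum>j=1..Mc. (\<Sum>k. (coef Mv \<psi> (f j) (k + K + 1))\<^sup>2)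
        + (\<Sum>k=1..K. (c_hat \<psi> Y N j k \<omega> - coef Mv \<psi> (f j) k)\<^sup>2))"
    unfolding p_hat_def using integral_sq_approx_error L2 by (intro sum.cong) auto
  moreover have "0 \<le> (\<Sum>j=1..Mc. \<integral>y. (f j y - p_hat \<psi> q Y N K j y \<omega>)\<^sup>2 * inverse (q y) \<partial>Mv)"
    using q_pos by (intro sum_nonneg integral_nonneg_AE AE_I2) auto
  ultimately show "e_L2 Mv \<psi> q f Mc Y N K \<omega> = sqrt (\<Sum>j=1..Mc. (\<Sum>k. (coef Mv \<psi> (f j) (k + K + 1))\<^sup>2)
      + (\<Sum>k=1..K. (c_hat \<psi> Y N j k \<omega> - coef Mv \<psi> (f j) k)\<^sup>2))"
    and "0 \<le> (\<Sum>j=1..Mc. (\<Sum>k. (coef Mv \<psi> (f j) (k + K + 1))\<^sup>2)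
      + (\<Sum>k=1..K. (c_hat \<psi> Y N j k \<omega> - coef Mv \<psi> (f j) k)\<^sup>2))"
    by (simp_all add: e_L2_def)
qed

lemma expectation_e_L2_sq:
  assumes iid: "iid_samples P Mv Y N Mc f" and N: "N \<ge> 1"
    and dens: "\<forall>j\<in>{1..Mc}. prob_density Mv (f j)"
    and L2: "\<forall>j\<in>{1..Mc}. L2w Mv (\<lambda>y. inverse (q y)) (f j)"
    and var_fin: "\<forall>j\<in>{1..Mc}. \<forall>k\<ge>1. integrable Mv (\<lambda>y. f j y * (\<psi> k y)\<^sup>2)"
  shows "e_L2 Mv \<psi> q f Mc Y N K \<in> borel_measurable P"
    and "integrable P (\<lambda>\<omega>. (e_L2 Mv \<psi> q f Mc Y N K \<omega>)\<^sup>2)"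
    and "prob_space.expectation P (\<lambda>\<omega>. (e_L2 Mv \<psi> q f Mc Y N K \<omega>)\<^sup>2) = err_bound Mv \<psi> f Mc N K"
proof -
  interpret prob_space P
    using iid by (simp add: iid_samples_def)
  define D where "D = (\<lambda>j k \<omega>. (c_hat \<psi> Y N j k \<omega> - coef Mv \<psi> (f j) k)\<^sup>2)"
  define R where "R j = (\<Sum>k. (coef Mv \<psi> (f j) (k + K + 1))\<^sup>2)" for j
  define Q where "Q = (\<lambda>\<omega>. \<Sum>j=1..Mc. R j + (\<Sum>k=1..K. D j k \<omega>))"
  have D: "integrable P (D j k)" "expectation (D j k) = var_psi Mv \<psi> (f j) k / N"
    if "j \<in> {1..Mc}" "k \<in> {1..K}" for j k
    using mean_square_error_c_hat[OF iid that(1) N, of \<psi> k] dens var_fin psi_measurable that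
    by (auto simp: D_def)
  have e_eq: "e_L2 Mv \<psi> q f Mc Y N K = (\<lambda>\<omega>. sqrt (Q \<omega>))"
    by (intro ext) (simp only: e_L2_eq(1)[OF L2] Q_def R_def D_def)
  have e_sq: "(e_L2 Mv \<psi> q f Mc Y N K \<omega>)\<^sup>2 = Q \<omega>" for \<omega>
    using e_L2_eq(2)[OF L2] by (simp add: e_eq Q_def R_def D_def)
  have Q_int: "integrable P Q"
    unfolding Q_def using D by (auto intro!: Bochner_Integration.integrable_sum)
  then have [measurable]: "Q \<in> borel_measurable P" by simp
  show "e_L2 Mv \<psi> q f Mc Y N K \<in> borel_measurable P"
    unfolding e_eq by measurable
  show "integrable P (\<lambda>\<omega>. (e_L2 Mv \<psi> q f Mc Y N K \<omega>)\<^sup>2)"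
    unfolding e_sq using Q_int by simp
  have "expectation (\<lambda>\<omega>. (e_L2 Mv \<psi> q f Mc Y N K \<omega>)\<^sup>2) = expectation Q"
    by (simp add: e_sq)
  also have "\<dots> = (\<Sum>j=1..Mc. expectation (\<lambda>\<omega>. R j + (\<Sum>k=1..K. D j k \<omega>)))"
    unfolding Q_def using D
    by (intro Bochner_Integration.integral_sum) (auto intro!: Bochner_Integration.integrable_sum)
  also have "\<dots> = (\<Sum>j=1..Mc. R j + (\<Sum>k=1..K. var_psi Mv \<psi> (f j) k / N))"
  proof (intro sum.cong refl)
    fix j assume j: "j \<in> {1..Mc}"
    have "integrable P (\<lambda>\<omega>. \<Sum>k=1..K. D j k \<omega>)"
      using D[OF j] by (intro Bochner_Integration.integrable_sum) auto
    then have "expectation (\<lambda>\<omega>. R j + (\<Sum>k=1..K. D j k \<omega>))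
        = R j + expectation (\<lambda>\<omega>. \<Sum>k=1..K. D j k \<omega>)"
      by (simp add: prob_space)
    also have "expectation (\<lambda>\<omega>. \<Sum>k=1..K. D j k \<omega>) = (\<Sum>k=1..K. var_psi Mv \<psi> (f j) k / N)"
      using D[OF j] by (simp add: Bochner_Integration.integral_sum)
    finally show "expectation (\<lambda>\<omega>. R j + (\<Sum>k=1..K. D j k \<omega>))
        = R j + (\<Sum>k=1..K. var_psi Mv \<psi> (f j) k / N)" .
  qed
  also have "\<dots> = err_bound Mv \<psi> f Mc N K"
  proof -
    have "err_bound Mv \<psi> f Mc N K
        = (\<Sum>j=1..Mc. R j) + (1 / real N) * (\<Sum>j=1..Mc. \<Sum>k=1..K. var_psi Mv \<psi> (f j) k)"
      by (simp add: err_bound_def R_def)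
    then show ?thesis
      by (simp add: sum.distrib sum_distrib_left)
  qed
  finally show "expectation (\<lambda>\<omega>. (e_L2 Mv \<psi> q f Mc Y N K \<omega>)\<^sup>2) = err_bound Mv \<psi> f Mc N K" .
qed

lemma e_L2_moment_bounds:
  assumes iid: "iid_samples P Mv Y N Mc f" and N: "N \<ge> 1"
    and dens: "\<forall>j\<in>{1..Mc}. prob_density Mv (f j)"
    and L2: "\<forall>j\<in>{1..Mc}. L2w Mv (\<lambda>y. inverse (q y)) (f j)"
    and var_fin: "\<forall>j\<in>{1..Mc}. \<forall>k\<ge>1. integrable Mv (\<lambda>y. f j y * (\<psi> k y)\<^sup>2)"
  shows "integrable P (e_L2 Mv \<psi> q f Mc Y N K)
    \<and> integrable P (\<lambda>\<omega>. (e_L2 Mv \<psi> q f Mc Y N K \<omega>)\<^sup>2)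
    \<and> prob_space.expectation P (e_L2 Mv \<psi> q f Mc Y N K) \<le> sqrt (err_bound Mv \<psi> f Mc N K)
    \<and> prob_space.variance P (e_L2 Mv \<psi> q f Mc Y N K) \<le> err_bound Mv \<psi> f Mc N K"
proof -
  have P: "prob_space P"
    using iid by (simp add: iid_samples_def)
  note e = expectation_e_L2_sq[OF assms, of K]
  show ?thesis
    using prob_space.moments_le_of_second_moment_le[OF P e(1,2) e(3)[THEN eq_refl]] e(2) by simp
qed

lemma e_L2_moments_small:
  assumes dens: "\<forall>j\<in>{1..Mc}. prob_density Mv (f j)"
    and L2: "\<forall>j\<in>{1..Mc}. L2w Mv (\<lambda>y. inverse (q y)) (f j)"
    and var_fin: "\<forall>j\<in>{1..Mc}. \<forall>k\<ge>1. integrable Mv (\<lambda>y. f j y * (\<psi> k y)\<^sup>2)"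
  shows "\<forall>\<epsilon>>0. \<exists>K\<ge>(1::nat). \<exists>Nmin::nat. \<forall>N>Nmin. \<forall>(P::'w measure) Y. iid_samples P Mv Y N Mc f \<longrightarrow>
    prob_space.expectation P (e_L2 Mv \<psi> q f Mc Y N K) < \<epsilon> \<and>
    prob_space.variance P (e_L2 Mv \<psi> q f Mc Y N K) < \<epsilon>"
proof (intro allI impI)
  fix \<epsilon> :: real assume \<epsilon>: "0 < \<epsilon>"
  have "\<forall>j\<in>{1..Mc}. summable (\<lambda>k. (coef Mv \<psi> (f j) (Suc k))\<^sup>2)"
    using summable_coef_sq L2 by blast
  moreover have "0 < min \<epsilon> (\<epsilon>\<^sup>2)"
    using \<epsilon> by simp
  ultimately obtain K where K: "1 \<le> K" "eventually (\<lambda>N. err_bound Mv \<psi> f Mc N K < min \<epsilon> (\<epsilon>\<^sup>2)) sequentially"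
    by (rule err_bound_eventually_less)
  then obtain Nmin where Nmin: "\<And>N. Nmin \<le> N \<Longrightarrow> err_bound Mv \<psi> f Mc N K < min \<epsilon> (\<epsilon>\<^sup>2)"
    by (auto simp: eventually_sequentially)
  have "prob_space.expectation P (e_L2 Mv \<psi> q f Mc Y N K) < \<epsilon> \<and>
      prob_space.variance P (e_L2 Mv \<psi> q f Mc Y N K) < \<epsilon>"
    if N: "Nmin < N" and iid: "iid_samples P Mv Y N Mc f" for N and P :: "'w measure" and Y
  proof -
    have err: "err_bound Mv \<psi> f Mc N K < min \<epsilon> (\<epsilon>\<^sup>2)"
      using Nmin N by simp
    then have "sqrt (err_bound Mv \<psi> f Mc N K) < \<epsilon>"
      using \<epsilon> by (intro real_less_lsqrt) auto
    moreover have "1 \<le> N"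
      using N by simp
    then have "prob_space.expectation P (e_L2 Mv \<psi> q f Mc Y N K) \<le> sqrt (err_bound Mv \<psi> f Mc N K)"
      and "prob_space.variance P (e_L2 Mv \<psi> q f Mc Y N K) \<le> err_bound Mv \<psi> f Mc N K"
      using e_L2_moment_bounds[OF iid _ dens L2 var_fin, of K] by simp_all
    ultimately show ?thesis
      using err by linarith
  qed
  with K(1) show "\<exists>K\<ge>(1::nat). \<exists>Nmin::nat. \<forall>N>Nmin. \<forall>(P::'w measure) Y. iid_samples P Mv Y N Mc f \<longrightarrow>
      prob_space.expectation P (e_L2 Mv \<psi> q f Mc Y N K) < \<epsilon> \<and>
      prob_space.variance P (e_L2 Mv \<psi> q f Mc Y N K) < \<epsilon>"
    by blast
qed

end

(* Only the L2(1/q) part of in_H is used: Bessel's inequality already makes the coefficients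
   square-summable, so lam_pos and lam_HS are not needed. *)
theorem theorem1:
  fixes Mv :: "'a measure" and q :: "'a \<Rightarrow> real" and \<psi> :: "nat \<Rightarrow> 'a \<Rightarrow> real"
    and lam :: "nat \<Rightarrow> real" and \<theta> :: "nat \<Rightarrow> 't" and p :: "'t \<Rightarrow> 'a \<Rightarrow> real" and Mc :: nat
  assumes q_meas: "q \<in> borel_measurable Mv"
    and q_pos: "\<forall>y\<in>space Mv. q y > 0"
    and onb: "complete_orthonormal Mv q \<psi>"
    and lam_pos: "\<forall>k\<ge>1. lam k > 0"
    and lam_HS: "summable (\<lambda>k. (lam (Suc k))\<^sup>2)"
    and dens: "\<forall>j\<in>{1..Mc}. prob_density Mv (p (\<theta> j))"
    and in_H: "\<forall>j\<in>{1..Mc}. in_RKHS Mv q \<psi> lam (p (\<theta> j))"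
    and var_fin: "\<forall>j\<in>{1..Mc}. \<forall>k\<ge>1. integrable Mv (\<lambda>y. p (\<theta> j) y * (\<psi> k y)\<^sup>2)"
  shows "(\<forall>(N::nat) (K1::nat) (P::'w measure) Y.
           N \<ge> 1 \<and> K1 \<ge> 1 \<and> iid_samples P Mv Y N Mc (\<lambda>j. p (\<theta> j)) \<longrightarrow>
             integrable P (e_L2 Mv \<psi> q (\<lambda>j. p (\<theta> j)) Mc Y N K1) \<and>
             integrable P (\<lambda>\<omega>. (e_L2 Mv \<psi> q (\<lambda>j. p (\<theta> j)) Mc Y N K1 \<omega>)\<^sup>2) \<and>
             prob_space.expectation P (e_L2 Mv \<psi> q (\<lambda>j. p (\<theta> j)) Mc Y N K1)
               \<le> sqrt (err_bound Mv \<psi> (\<lambda>j. p (\<theta> j)) Mc N K1) \<and>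
             prob_space.variance P (e_L2 Mv \<psi> q (\<lambda>j. p (\<theta> j)) Mc Y N K1)
               \<le> err_bound Mv \<psi> (\<lambda>j. p (\<theta> j)) Mc N K1) \<and>
         (\<forall>\<epsilon>>0. \<exists>K1\<ge>(1::nat). \<exists>Nmin::nat. \<forall>N>Nmin. \<forall>(P::'w measure) Y.
           iid_samples P Mv Y N Mc (\<lambda>j. p (\<theta> j)) \<longrightarrow>
             prob_space.expectation P (e_L2 Mv \<psi> q (\<lambda>j. p (\<theta> j)) Mc Y N K1) < \<epsilon> \<and>
             prob_space.variance P (e_L2 Mv \<psi> q (\<lambda>j. p (\<theta> j)) Mc Y N K1) < \<epsilon>)"
proof -
  have L2: "\<forall>j\<in>{1..Mc}. L2w Mv (\<lambda>y. inverse (q y)) (p (\<theta> j))"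
    using in_H by (simp add: in_RKHS_def)
  show ?thesis
    by (rule conjI[OF _ e_L2_moments_small[OF q_meas q_pos onb dens L2 var_fin]],
        intro allI impI, elim conjE, rule e_L2_moment_bounds[OF q_meas q_pos onb _ _ dens L2 var_fin])
qed

end
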